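(* Let $\beta>0$ and let $N$ be a nonnegative integer random variable with $P(N\ge n)=1-e^{-\beta/n}$ for all integers $n\ge1$. Let $0<p<1$. For the one-dimensional oriented percolation with random range with bond parameter $p$, if $\beta>1/p$ then $\theta(p,0)=P(0\to\infty)>0$.
   Context: One-dimensional percolation with random range (equivalently, the APRR model with $q=0$, restricted to the line through the origin in direction $\vec e_1$). Let $\mathbf N=(N_i)_{i\in\mathbb{Z}}$ be i.i.d. with law $N$, and let $G_{\mathbf N}$ be the oriented graph on $\mathbb{Z}$ with bonds $\{(i,i+n): i\in\mathbb{Z},\ 1\le n\le N_i\}$. Given $p\in[0,1]$, each bond of $G_{\mathbf N}$ is open independently with probability $p$. $(0\to\infty)$ is the event that $0$ is connected by oriented open paths to infinitely many vertices, and $\theta(p,0)=P(0\to\infty)$. *)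

theory Defs
  imports "HOL-Probability.Probability"
begin

text \<open>Configuration at a site i: the range N_i and the bond states
  (bond (i, i+n) is open iff the second component is True at n; index 0 unused).\<close>
type_synonym site = "nat \<times> (nat \<Rightarrow> bool)"

definition site_measure :: "nat pmf \<Rightarrow> real \<Rightarrow> site measure" where
  "site_measure Nl p =
     measure_pmf Nl \<Otimes>\<^sub>M (PiM (UNIV :: nat set) (\<lambda>_. measure_pmf (bernoulli_pmf p)))"

definition perc_measure :: "nat pmf \<Rightarrow> real \<Rightarrow> (int \<Rightarrow> site) measure" where
  "perc_measure Nl p = PiM (UNIV :: int set) (\<lambda>_. site_measure Nl p)"

definition open_bond :: "(int \<Rightarrow> site) \<Rightarrow> int \<Rightarrow> int \<Rightarrow> bool" where
  "open_bond \<omega> i j \<longleftrightarrow> i < j \<and> j - i \<le> int (fst (\<omega> i)) \<and> snd (\<omega> i) (nat (j - i))"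

definition connected_to_infinity :: "(int \<Rightarrow> site) \<Rightarrow> bool" where
  "connected_to_infinity \<omega> \<longleftrightarrow>
     infinite {j. (0::int, j) \<in> {(i, j). open_bond \<omega> i j}\<^sup>*}"

definition theta :: "nat pmf \<Rightarrow> real \<Rightarrow> real" where
  "theta Nl p = measure (perc_measure Nl p)
     {\<omega> \<in> space (perc_measure Nl p). connected_to_infinity \<omega>}"

end

theory Submission
  imports Defs
begin

text \<open>Every site \<open>n > 0\<close> is reached from 0 as soon as it receives an open bond from some site
  in \<open>[0, n)\<close>. Site \<open>j\<close> receives none with probability
  \<open>\<Prod>i<j. 1 - p P(N \<ge> j - i) \<le> exp (- p (\<Sum>m = 1..j. P(N \<ge> m)))\<close>; since
  \<open>P(N \<ge> m) \<approx> \<beta> / m\<close>, this is of order \<open>j powr (- p \<beta>)\<close>, summable as \<open>p \<beta> > 1\<close>.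
  Choose \<open>K\<close> so that the tail of the series beyond \<open>K\<close> is below 1 and require the unit bonds
  \<open>(i, i + 1)\<close>, \<open>0 \<le> i < K\<close>, to be open. By independence of the sites this costs only a factor
  \<open>(p P(N \<ge> 1)) ^ K > 0\<close>, and a union bound over \<open>j > K\<close> leaves positive probability that
  every site is reached.\<close>

lemma one_minus_exp_neg_ge:
  fixes x :: real
  assumes "0 \<le> x"
  shows "x - x\<^sup>2 \<le> 1 - exp (- x)"
proof -
  have "exp (- x) \<le> 1 / (1 + x)"
    using exp_ge_add_one_self[of x] assms by (simp add: exp_minus field_simps)
  moreover have "x - x\<^sup>2 \<le> 1 - 1 / (1 + x)"
    using assms by (simp add: field_simps power2_eq_square)
  ultimately show ?thesis by linarith
qed

lemma prod_one_minus_le_exp_neg_sum: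
  fixes x :: "'a \<Rightarrow> real"
  assumes "finite A" "\<And>i. i \<in> A \<Longrightarrow> x i \<le> 1"
  shows "(\<Prod>i\<in>A. 1 - x i) \<le> exp (- (\<Sum>i\<in>A. x i))"
proof -
  have "(\<Prod>i\<in>A. 1 - x i) \<le> (\<Prod>i\<in>A. exp (- x i))"
    using assms exp_ge_add_one_self[of "- x _"] by (intro prod_mono) auto
  also have "\<dots> = exp (\<Sum>i\<in>A. - x i)" using assms(1) by (simp add: exp_sum)
  finally show ?thesis by (simp add: sum_negf)
qed

lemma summable_inverse_Suc_squared: "summable (\<lambda>n. inverse (real (Suc n)) ^ 2)"
  using summable_ignore_initial_segment[OF inverse_power_summable[of 2], of 1]
  by (simp add: power_inverse)

lemma sum_one_minus_exp_neg_ge_ln: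
  fixes \<beta> :: real
  assumes "0 \<le> \<beta>"
  shows "\<beta> * ln (real (Suc j)) - \<beta>\<^sup>2 * (\<Sum>n. inverse (real (Suc n)) ^ 2)
    \<le> (\<Sum>i<j. 1 - exp (- \<beta> / real (Suc i)))"
proof -
  have "\<beta> * ln (real (Suc j)) \<le> \<beta> * harm j"
    using ln_le_harm[of j] assms by (simp add: mult_left_mono add.commute)
  moreover have "(\<Sum>i<j. inverse (real (Suc i)) ^ 2) \<le> (\<Sum>n. inverse (real (Suc n)) ^ 2)"
    by (rule sum_le_suminf[OF summable_inverse_Suc_squared]) auto
  then have "\<beta>\<^sup>2 * (\<Sum>i<j. inverse (real (Suc i)) ^ 2) \<le> \<beta>\<^sup>2 * (\<Sum>n. inverse (real (Suc n)) ^ 2)"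
    by (simp add: mult_left_mono)
  moreover have "\<beta> * harm j - \<beta>\<^sup>2 * (\<Sum>i<j. inverse (real (Suc i)) ^ 2)
      = (\<Sum>i<j. \<beta> / real (Suc i) - (\<beta> / real (Suc i))\<^sup>2)"
    by (simp add: harm_altdef sum_subtractf sum_distrib_left divide_inverse power_mult_distrib)
  moreover have "\<dots> \<le> (\<Sum>i<j. 1 - exp (- \<beta> / real (Suc i)))"
    using assms one_minus_exp_neg_ge by (intro sum_mono) auto
  ultimately show ?thesis by linarith
qed

lemma summable_exp_neg_sum_one_minus_exp:
  fixes \<beta> p :: real
  assumes "0 < \<beta>" "1 < p * \<beta>"
  shows "summable (\<lambda>j. exp (- p * (\<Sum>i<j. 1 - exp (- \<beta> / real (Suc i)))))"
proof -
  define c where "c = (\<Sum>n. inverse (real (Suc n)) ^ 2)"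
  have "0 < p" using assms zero_less_mult_pos2[of p \<beta>] by simp
  have summable_powr: "summable (\<lambda>j. real (Suc j) powr (- (p * \<beta>)))"
    using summable_ignore_initial_segment[of "\<lambda>n. real n powr (- (p * \<beta>))" 1] assms
    by (simp add: summable_real_powr_iff)
  have bound: "exp (- p * (\<Sum>i<j. 1 - exp (- \<beta> / real (Suc i))))
      \<le> exp (p * \<beta>\<^sup>2 * c) * real (Suc j) powr (- (p * \<beta>))" for j
  proof -
    have "- p * (\<Sum>i<j. 1 - exp (- \<beta> / real (Suc i))) \<le> - p * (\<beta> * ln (real (Suc j)) - \<beta>\<^sup>2 * c)"
      using sum_one_minus_exp_neg_ge_ln[of \<beta> j] assms \<open>0 < p\<close> by (simp add: c_def)
    then show ?thesis by (simp add: powr_def exp_add[symmetric] algebra_simps)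
  qed
  show ?thesis
    by (rule summable_comparison_test[where g = "\<lambda>j. exp (p * \<beta>\<^sup>2 * c) * real (Suc j) powr (- (p * \<beta>))"])
      (use bound summable_powr in \<open>auto intro: summable_mult\<close>)
qed

abbreviation bond_states :: "real \<Rightarrow> (nat \<Rightarrow> bool) measure" where
  "bond_states p \<equiv> PiM UNIV (\<lambda>_. measure_pmf (bernoulli_pmf p))"

lemma prob_space_site_measure: "prob_space (site_measure Nl p)"
  unfolding site_measure_def
  by (intro prob_space_pair prob_space_measure_pmf prob_space_PiM)

lemma prob_space_perc_measure: "prob_space (perc_measure Nl p)"
  unfolding perc_measure_def by (intro prob_space_PiM prob_space_site_measure)

lemma space_site_measure [simp]: "space (site_measure Nl p) = UNIV"
  by (simp add: site_measure_def space_pair_measure space_PiM)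

lemma space_perc_measure [simp]: "space (perc_measure Nl p) = UNIV"
  by (simp add: perc_measure_def space_PiM)

lemma sets_bond_states_all_open:
  "finite F \<Longrightarrow> {f. \<forall>k\<in>F. f k} \<in> sets (bond_states p)"
proof -
  assume "finite F"
  then have "{f \<in> space (bond_states p). \<forall>k\<in>F. f k \<in> {True}} \<in> sets (bond_states p)"
    by (intro sets.sets_Collect_finite_All) (auto intro: sets_Collect_single)
  then show ?thesis by (simp add: space_PiM)
qed

lemma measure_bond_states_all_open:
  assumes "finite F" "0 \<le> p" "p \<le> 1"
  shows "measure (bond_states p) {f. \<forall>k\<in>F. f k} = p ^ card F"
proof -
  interpret product_prob_space "\<lambda>_::nat. measure_pmf (bernoulli_pmf p)" UNIV
    by (rule product_prob_spaceI) (rule prob_space_measure_pmf)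
  have "emeasure (bond_states p) {f \<in> space (bond_states p). \<forall>k\<in>F. f k \<in> {True}}
      = (\<Prod>k\<in>F. emeasure (measure_pmf (bernoulli_pmf p)) {True})"
    by (rule emeasure_PiM_Collect) (use assms in auto)
  also have "\<dots> = ennreal (p ^ card F)"
    using assms by (simp add: emeasure_pmf_single prod_ennreal[symmetric] ennreal_power)
  finally show ?thesis
    using assms by (simp add: space_PiM P.emeasure_eq_measure)
qed

lemma measure_site_Times_all_open:
  assumes "finite F" "0 \<le> p" "p \<le> 1"
  shows "measure (site_measure Nl p) (A \<times> {f. \<forall>k\<in>F. f k}) = measure_pmf.prob Nl A * p ^ card F"
proof -
  interpret B: prob_space "bond_states p" by (intro prob_space_PiM prob_space_measure_pmf)
  interpret S: prob_space "site_measure Nl p" by (rule prob_space_site_measure)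
  have "emeasure (site_measure Nl p) (A \<times> {f. \<forall>k\<in>F. f k})
      = emeasure (measure_pmf Nl) A * emeasure (bond_states p) {f. \<forall>k\<in>F. f k}"
    unfolding site_measure_def
    by (rule B.emeasure_pair_measure_Times) (use assms sets_bond_states_all_open in auto)
  then show ?thesis
    using measure_bond_states_all_open[OF assms] assms
    by (simp add: S.emeasure_eq_measure B.emeasure_eq_measure measure_pmf.emeasure_eq_measure
        ennreal_mult''[symmetric])
qed

lemma measure_perc_cylinder:
  assumes "finite J" "\<And>i. i \<in> J \<Longrightarrow> X i \<in> sets (site_measure Nl p)"
  shows "{\<omega>. \<forall>i\<in>J. \<omega> i \<in> X i} \<in> sets (perc_measure Nl p)"
    and "measure (perc_measure Nl p) {\<omega>. \<forall>i\<in>J. \<omega> i \<in> X i} = (\<Prod>i\<in>J. measure (site_measure Nl p) (X i))"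
proof -
  interpret product_prob_space "\<lambda>_::int. site_measure Nl p" UNIV
    by (rule product_prob_spaceI) (rule prob_space_site_measure)
  have "{\<omega> \<in> space (perc_measure Nl p). \<forall>i\<in>J. \<omega> i \<in> X i} \<in> sets (perc_measure Nl p)"
    unfolding perc_measure_def
    by (intro sets.sets_Collect_finite_All) (auto intro: sets_Collect_single assms)
  then show "{\<omega>. \<forall>i\<in>J. \<omega> i \<in> X i} \<in> sets (perc_measure Nl p)" by simp
  have "emeasure (perc_measure Nl p) {\<omega> \<in> space (perc_measure Nl p). \<forall>i\<in>J. \<omega> i \<in> X i}
      = (\<Prod>i\<in>J. emeasure (site_measure Nl p) (X i))"
    unfolding perc_measure_def by (rule emeasure_PiM_Collect) (use assms in auto)
  then show "measure (perc_measure Nl p) {\<omega>. \<forall>i\<in>J. \<omega> i \<in> X i} = (\<Prod>i\<in>J. measure (site_measure Nl p) (X i))"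
    by (simp add: perc_measure_def space_PiM P.emeasure_eq_measure M.emeasure_eq_measure
        prod_ennreal prod_nonneg)
qed

definition bond_open :: "nat \<Rightarrow> site set" where
  "bond_open m = {s. m \<le> fst s \<and> snd s m}"

lemma open_bond_iff_bond_open: "i < j \<Longrightarrow> open_bond \<omega> i j \<longleftrightarrow> \<omega> i \<in> bond_open (nat (j - i))"
  by (auto simp: open_bond_def bond_open_def)

lemma bond_open_eq_Times: "bond_open m = {m..} \<times> {f. \<forall>k\<in>{m}. f k}"
  by (auto simp: bond_open_def)

lemma sets_bond_open [simp]: "bond_open m \<in> sets (site_measure Nl p)"
  unfolding bond_open_eq_Times site_measure_def
  by (intro pair_measureI sets_bond_states_all_open) auto

lemma sets_not_bond_open [simp]: "- bond_open m \<in> sets (site_measure Nl p)"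
  using sets.compl_sets[OF sets_bond_open, of Nl p m] by (simp add: Compl_eq_Diff_UNIV)

lemma measure_bond_open:
  "0 \<le> p \<Longrightarrow> p \<le> 1 \<Longrightarrow> measure (site_measure Nl p) (bond_open m) = measure_pmf.prob Nl {m..} * p"
  unfolding bond_open_eq_Times by (subst measure_site_Times_all_open) auto

lemma measure_not_bond_open:
  assumes "0 \<le> p" "p \<le> 1"
  shows "measure (site_measure Nl p) (- bond_open m) = 1 - measure_pmf.prob Nl {m..} * p"
proof -
  interpret prob_space "site_measure Nl p" by (rule prob_space_site_measure)
  show ?thesis
    using prob_compl[OF sets_bond_open] measure_bond_open[OF assms] by (simp add: Compl_eq_Diff_UNIV)
qed

lemma measure_bond_open_one_not_bond_open:
  assumes "2 \<le> m" "0 \<le> p" "p \<le> 1"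
  shows "measure (site_measure Nl p) (bond_open 1 \<inter> - bond_open m)
    = measure_pmf.prob Nl {1..} * p - measure_pmf.prob Nl {m..} * p\<^sup>2"
proof -
  interpret prob_space "site_measure Nl p" by (rule prob_space_site_measure)
  have "bond_open 1 \<inter> bond_open m = {m..} \<times> {f. \<forall>k\<in>{1, m}. f k}"
    using assms(1) by (auto simp: bond_open_def)
  then have "measure (site_measure Nl p) (bond_open 1 \<inter> bond_open m) = measure_pmf.prob Nl {m..} * p\<^sup>2"
    using assms by (simp only:) (subst measure_site_Times_all_open, auto simp: power2_eq_square)
  then show ?thesis
    using finite_measure_Diff'[OF sets_bond_open sets_bond_open, of 1 m] measure_bond_open[OF assms(2,3)]
    by (simp add: Diff_eq)
qed

lemma measure_bond_open_one_not_bond_open_le: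
  assumes "2 \<le> m" "0 \<le> p" "p \<le> 1"
  shows "measure (site_measure Nl p) (bond_open 1 \<inter> - bond_open m)
    \<le> measure_pmf.prob Nl {1..} * p * (1 - p * measure_pmf.prob Nl {m..})"
proof -
  have "measure_pmf.prob Nl {1..} * (p * p * measure_pmf.prob Nl {m..}) \<le> p * p * measure_pmf.prob Nl {m..}"
    using assms by (simp add: mult_left_le_one_le)
  then show ?thesis
    using measure_bond_open_one_not_bond_open[OF assms, where Nl = Nl]
    by (simp add: algebra_simps power2_eq_square)
qed

lemma pred_open_bond [measurable]: "Measurable.pred (perc_measure Nl p) (\<lambda>\<omega>. open_bond \<omega> i j)"
proof (cases "i < j")
  case True
  have "(\<lambda>\<omega>. \<omega> i) \<in> perc_measure Nl p \<rightarrow>\<^sub>M site_measure Nl p"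
    unfolding perc_measure_def by (rule measurable_component_singleton) simp
  then show ?thesis
    using pred_sets2[OF sets_bond_open] True by (simp add: open_bond_iff_bond_open)
qed (simp add: open_bond_def)

lemma pred_open_path:
  "Measurable.pred (perc_measure Nl p) (\<lambda>\<omega>. (a, b) \<in> {(i, j). open_bond \<omega> i j} ^^ k)"
proof (induction k arbitrary: b)
  case (Suc k)
  have "(a, b) \<in> {(i, j). open_bond \<omega> i j} ^^ Suc k
      \<longleftrightarrow> (\<exists>c. (a, c) \<in> {(i, j). open_bond \<omega> i j} ^^ k \<and> open_bond \<omega> c b)" for \<omega>
    by auto
  then show ?case using Suc by (simp del: relpow.simps) measurable
qed simp

lemma connected_to_infinity_iff_unbounded:
  "connected_to_infinity \<omega> \<longleftrightarrow>
     (\<forall>n::nat. \<exists>j k. (0, j) \<in> {(i, j). open_bond \<omega> i j} ^^ k \<and> n \<le> \<bar>j\<bar>)"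
proof -
  let ?S = "{j. (0::int, j) \<in> {(i, j). open_bond \<omega> i j}\<^sup>*}"
  have "finite ?S \<longleftrightarrow> (\<exists>n::nat. \<forall>j\<in>?S. \<bar>j\<bar> < n)"
  proof
    assume "finite ?S"
    then have "bdd_above (abs ` ?S)" by auto
    then obtain m where "\<forall>j\<in>?S. \<bar>j\<bar> \<le> m" by (auto simp: bdd_above_def)
    then show "\<exists>n::nat. \<forall>j\<in>?S. \<bar>j\<bar> < n"
      by (intro exI[of _ "nat m + 1"]) force
  next
    assume "\<exists>n::nat. \<forall>j\<in>?S. \<bar>j\<bar> < n"
    then obtain n :: nat where "\<forall>j\<in>?S. \<bar>j\<bar> < n" ..
    then have "?S \<subseteq> {-int n..int n}" by force
    then show "finite ?S" using finite_subset by blast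
  qed
  then show ?thesis
    unfolding connected_to_infinity_def by (auto simp: rtrancl_power not_less)
qed

lemma sets_connected_to_infinity:
  "{\<omega> \<in> space (perc_measure Nl p). connected_to_infinity \<omega>} \<in> sets (perc_measure Nl p)"
  unfolding connected_to_infinity_iff_unbounded using pred_open_path by measurable

lemma connected_to_infinity_if_every_site_entered:
  assumes "\<And>n::nat. 0 < n \<Longrightarrow> \<exists>i\<in>{0..<int n}. open_bond \<omega> i (int n)"
  shows "connected_to_infinity \<omega>"
proof -
  let ?R = "{(i, j). open_bond \<omega> i j}"
  have reach: "(0, int n) \<in> ?R\<^sup>*" for n
  proof (induction n rule: less_induct)
    case (less n)
    show ?case
    proof (cases "n = 0")
      case False
      then obtain i where i: "i \<in> {0..<int n}" "open_bond \<omega> i (int n)" using assms by blast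
      then have "(0, i) \<in> ?R\<^sup>*" using less[of "nat i"] by (simp add: nat_less_iff)
      with i show ?thesis by (auto intro: rtrancl_into_rtrancl)
    qed simp
  qed
  have "range int \<subseteq> {j. (0::int, j) \<in> ?R\<^sup>*}" using reach by auto
  moreover have "infinite (range (int :: nat \<Rightarrow> int))"
    using finite_imageD[of int UNIV] by auto
  ultimately show ?thesis
    unfolding connected_to_infinity_def using finite_subset by auto
qed

definition unit_bonds_open :: "nat \<Rightarrow> (int \<Rightarrow> site) set" where
  "unit_bonds_open K = {\<omega>. \<forall>i\<in>{0..<int K}. \<omega> i \<in> bond_open 1}"

definition no_bond_into :: "nat \<Rightarrow> (int \<Rightarrow> site) set" where
  "no_bond_into j = {\<omega>. \<forall>i\<in>{0..<int j}. \<omega> i \<notin> bond_open (nat (int j - i))}"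

lemma connected_to_infinity_if_unit_bonds_open:
  assumes "\<omega> \<in> unit_bonds_open K" "\<And>j. K < j \<Longrightarrow> \<omega> \<notin> no_bond_into j"
  shows "connected_to_infinity \<omega>"
proof (rule connected_to_infinity_if_every_site_entered)
  fix n :: nat assume "0 < n"
  show "\<exists>i\<in>{0..<int n}. open_bond \<omega> i (int n)"
  proof (cases "n \<le> K")
    case True
    then have "open_bond \<omega> (int n - 1) (int n)"
      using assms(1) \<open>0 < n\<close> by (auto simp: unit_bonds_open_def open_bond_iff_bond_open)
    then show ?thesis using \<open>0 < n\<close> by force
  next
    case False
    then obtain i where "i \<in> {0..<int n}" "\<omega> i \<in> bond_open (nat (int n - i))"
      using assms(2)[of n] by (auto simp: no_bond_into_def)
    then show ?thesis by (auto simp: open_bond_iff_bond_open)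
  qed
qed

lemma sets_unit_bonds_open: "unit_bonds_open K \<in> sets (perc_measure Nl p)"
  unfolding unit_bonds_open_def by (rule measure_perc_cylinder) auto

lemma sets_no_bond_into: "no_bond_into j \<in> sets (perc_measure Nl p)"
  unfolding no_bond_into_def Compl_iff[symmetric] by (rule measure_perc_cylinder) auto

lemma measure_unit_bonds_open:
  "0 \<le> p \<Longrightarrow> p \<le> 1 \<Longrightarrow>
    measure (perc_measure Nl p) (unit_bonds_open K) = (measure_pmf.prob Nl {1..} * p) ^ K"
  unfolding unit_bonds_open_def by (subst measure_perc_cylinder) (auto simp: measure_bond_open)

lemma measure_unit_bonds_open_no_bond_into_le:
  assumes "0 \<le> p" "p \<le> 1" "K < j"
  shows "measure (perc_measure Nl p) (unit_bonds_open K \<inter> no_bond_into j)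
    \<le> (measure_pmf.prob Nl {1..} * p) ^ K * exp (- p * (\<Sum>i<j. measure_pmf.prob Nl {Suc i..}))"
proof -
  define q where "q m = measure_pmf.prob Nl {m..}" for m
  define X where "X i = (if i < K then bond_open 1 \<inter> - bond_open (j - i) else - bond_open (j - i))" for i
  have q_le: "p * q m \<le> 1" for m
    using assms by (simp add: q_def mult_le_one)
  have X_le: "measure (site_measure Nl p) (X i) \<le> (if i < K then q 1 * p else 1) * (1 - p * q (j - i))"
    if "i < j" for i
  proof (cases "i < K")
    case True
    then have "2 \<le> j - i" using assms(3) by linarith
    then show ?thesis
      using True assms measure_bond_open_one_not_bond_open_le[of "j - i" p Nl] by (simp add: X_def q_def)
  next
    case False
    then show ?thesis using assms measure_not_bond_open[of p Nl "j - i"] by (simp add: X_def q_def)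
  qed
  have "unit_bonds_open K \<inter> no_bond_into j = {\<omega>. \<forall>i\<in>{0..<int j}. \<omega> i \<in> X (nat i)}"
    using assms(3) by (auto simp: unit_bonds_open_def no_bond_into_def X_def nat_diff_distrib)
  then have "measure (perc_measure Nl p) (unit_bonds_open K \<inter> no_bond_into j)
      = (\<Prod>i\<in>{0..<int j}. measure (site_measure Nl p) (X (nat i)))"
    by (simp only:) (rule measure_perc_cylinder, auto simp: X_def)
  also have "\<dots> = (\<Prod>i<j. measure (site_measure Nl p) (X i))"
    using image_atLeastZeroLessThan_int[of "int j"] by (simp add: prod.reindex)
  also have "\<dots> \<le> (\<Prod>i<j. (if i < K then q 1 * p else 1) * (1 - p * q (j - i)))"
    using X_le q_le by (intro prod_mono) auto
  also have "\<dots> = (q 1 * p) ^ K * (\<Prod>i<j. 1 - p * q (j - i))"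
  proof -
    have "{..<j} \<inter> {i. i < K} = {..<K}" using assms(3) by auto
    then show ?thesis by (simp add: prod.distrib prod.If_cases)
  qed
  also have "\<dots> \<le> (q 1 * p) ^ K * exp (- (\<Sum>i<j. p * q (j - i)))"
    using assms q_le by (intro mult_left_mono prod_one_minus_le_exp_neg_sum) (auto simp: q_def)
  also have "(\<Sum>i<j. p * q (j - i)) = p * (\<Sum>i<j. q (Suc i))"
    using sum.nat_diff_reindex[of "\<lambda>i. q (Suc i)" j]
    by (simp add: sum_distrib_left[symmetric] Suc_diff_Suc)
  finally show ?thesis by (simp add: q_def)
qed

lemma measure_unit_bonds_open_some_no_bond_into_le:
  assumes "0 \<le> p" "p \<le> 1"
    and "summable (\<lambda>t. exp (- p * (\<Sum>i<t + Suc K. measure_pmf.prob Nl {Suc i..})))" (is "summable ?a")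
  shows "measure (perc_measure Nl p) (\<Union>t. unit_bonds_open K \<inter> no_bond_into (t + Suc K))
    \<le> (measure_pmf.prob Nl {1..} * p) ^ K * (\<Sum>t. ?a t)"
proof -
  interpret prob_space "perc_measure Nl p" by (rule prob_space_perc_measure)
  define c where "c = measure_pmf.prob Nl {1..} * p"
  define F where "F t = unit_bonds_open K \<inter> no_bond_into (t + Suc K)" for t
  have F_le: "prob (F t) \<le> c ^ K * ?a t" for t
    unfolding F_def c_def using assms by (intro measure_unit_bonds_open_no_bond_into_le) auto
  have F_sets: "F t \<in> events" for t
    unfolding F_def by (intro sets.Int sets_unit_bonds_open sets_no_bond_into)
  have summable_F: "summable (\<lambda>t. prob (F t))"
    by (rule summable_comparison_test[where g = "\<lambda>t. c ^ K * ?a t"])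
      (use F_le assms(3) in \<open>auto intro: summable_mult\<close>)
  have "prob (\<Union>t. F t) \<le> (\<Sum>t. prob (F t))"
    using F_sets summable_F by (intro finite_measure_subadditive_countably) auto
  also have "\<dots> \<le> (\<Sum>t. c ^ K * ?a t)"
    using F_le summable_F assms(3) by (intro suminf_le summable_mult) auto
  also have "\<dots> = c ^ K * (\<Sum>t. ?a t)"
    using assms(3) by (rule suminf_mult)
  finally show ?thesis by (simp add: F_def c_def)
qed

lemma theta_pos_if_summable:
  assumes "0 < p" "p \<le> 1" "0 < measure_pmf.prob Nl {1..}"
    and "summable (\<lambda>j. exp (- p * (\<Sum>i<j. measure_pmf.prob Nl {Suc i..})))" (is "summable ?a")
  shows "0 < theta Nl p"
proof -
  interpret prob_space "perc_measure Nl p" by (rule prob_space_perc_measure)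
  define c where "c = measure_pmf.prob Nl {1..} * p"
  obtain K where "norm (\<Sum>t. ?a (t + Suc K)) < 1"
    using suminf_exist_split[OF zero_less_one assms(4)] by (metis le_SucI order_refl)
  moreover have tail: "summable (\<lambda>t. ?a (t + Suc K))"
    using assms(4) by (rule summable_ignore_initial_segment)
  ultimately have pos: "0 < c ^ K * (1 - (\<Sum>t. ?a (t + Suc K)))"
    using assms by (simp add: c_def)
  define E where "E = unit_bonds_open K - (\<Union>t. unit_bonds_open K \<inter> no_bond_into (t + Suc K))"
  have "unit_bonds_open K \<inter> no_bond_into (t + Suc K) \<in> events" for t
    by (intro sets.Int sets_unit_bonds_open sets_no_bond_into)
  then have "(\<Union>t. unit_bonds_open K \<inter> no_bond_into (t + Suc K)) \<in> events"
    by (intro sets.countable_UN) blast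
  then have "prob E = c ^ K - prob (\<Union>t. unit_bonds_open K \<inter> no_bond_into (t + Suc K))"
    unfolding E_def using assms
    by (subst finite_measure_Diff[OF sets_unit_bonds_open]) (auto simp: measure_unit_bonds_open c_def)
  also have "\<dots> \<ge> c ^ K * (1 - (\<Sum>t. ?a (t + Suc K)))"
    using measure_unit_bonds_open_some_no_bond_into_le[of p Nl K] tail assms
    by (simp add: c_def algebra_simps)
  finally have "c ^ K * (1 - (\<Sum>t. ?a (t + Suc K))) \<le> prob E" .
  moreover have "E \<subseteq> {\<omega> \<in> space (perc_measure Nl p). connected_to_infinity \<omega>}"
  proof safe
    fix \<omega> assume "\<omega> \<in> E"
    then have unit: "\<omega> \<in> unit_bonds_open K" and none: "\<forall>t. \<omega> \<notin> no_bond_into (t + Suc K)"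
      by (auto simp: E_def)
    have "\<omega> \<notin> no_bond_into j" if "K < j" for j
      using none[rule_format, of "j - Suc K"] that by simp
    with unit show "connected_to_infinity \<omega>" by (rule connected_to_infinity_if_unit_bonds_open)
  qed simp
  then have "prob E \<le> theta Nl p"
    unfolding theta_def by (intro finite_measure_mono sets_connected_to_infinity)
  ultimately show ?thesis using pos by linarith
qed

theorem theorem6:
  fixes \<beta> p :: real and Nl :: "nat pmf"
  assumes "\<beta> > 0"
    and "\<And>n::nat. n \<ge> 1 \<Longrightarrow> measure_pmf.prob Nl {n..} = 1 - exp (- \<beta> / real n)"
    and "0 < p" and "p < 1"
    and "\<beta> > 1 / p"
  shows "theta Nl p > 0"
proof (rule theta_pos_if_summable)
  have "(\<lambda>j. exp (- p * (\<Sum>i<j. measure_pmf.prob Nl {Suc i..})))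
      = (\<lambda>j. exp (- p * (\<Sum>i<j. 1 - exp (- \<beta> / real (Suc i)))))"
    using assms(2) by (simp del: of_nat_Suc)
  moreover have "1 < p * \<beta>" using assms(3,5) by (simp add: field_simps)
  ultimately show "summable (\<lambda>j. exp (- p * (\<Sum>i<j. measure_pmf.prob Nl {Suc i..})))"
    using summable_exp_neg_sum_one_minus_exp[OF assms(1)] by simp
  show "0 < measure_pmf.prob Nl {1..}" using assms(1) assms(2)[of 1] by simp
qed (use assms in auto)

end
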